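(* Let $\mathbb F=\mathbb R$ or $\mathbb C$, let $U_1,V_1,U_1',V_1'$ be finite-dimensional normed vector spaces over $\mathbb F$, let $\mathcal A_1,\mathcal B_1:U_1\to V_1$ and $\mathcal A_1',\mathcal B_1':U_1'\to V_1'$ be surjective linear maps, and let $\varphi_1:U_1\to U_1'$, $\psi_1:V_1\to V_1'$ be homeomorphisms with $\psi_1\mathcal A_1=\mathcal A_1'\varphi_1$ and $\psi_1\mathcal B_1=\mathcal B_1'\varphi_1$. Then for every $u\in U_1$ and $v\in V_1$, \[\varphi_1(u+\operatorname{Ker}\mathcal B_1)=\varphi_1(u)+\operatorname{Ker}\mathcal B_1',\qquad \psi_1\bigl(v+\mathcal A_1(\operatorname{Ker}\mathcal B_1)\bigr)=\psi_1(v)+\mathcal A_1'(\operatorname{Ker}\mathcal B_1').\] Consequently $\varphi_1$ and $\psi_1$ induce well-defined bijections $\varphi_2:U_1/\operatorname{Ker}\mathcal B_1\to U_1'/\operatorname{Ker}\mathcal B_1'$ and $\psi_2:V_1/\mathcal A_1(\operatorname{Ker}\mathcal B_1)\to V_1'/\mathcal A_1'(\operatorname{Ker}\mathcal B_1')$, which are homeomorphisms (for the quotient topologies) satisfying $\psi_2\mathcal A_2=\mathcal A_2'\varphi_2$ and $\psi_2\mathcal B_2=\mathcal B_2'\varphi_2$, where $\mathcal A_2,\mathcal B_2$ and $\mathcal A_2',\mathcal B_2'$ are the linear maps induced by $\mathcal A_1,\mathcal B_1$ and $\mathcal A_1',\mathcal B_1'$ on these quotient spaces.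
   Context: Homeomorphisms are with respect to the norm topologies; $\varphi_1,\psi_1$ need not be linear. The induced map $\mathcal A_2:U_1/\operatorname{Ker}\mathcal B_1\to V_1/\mathcal A_1(\operatorname{Ker}\mathcal B_1)$ sends $u+\operatorname{Ker}\mathcal B_1$ to $\mathcal A_1(u)+\mathcal A_1(\operatorname{Ker}\mathcal B_1)$, and $\mathcal B_2$ sends $u+\operatorname{Ker}\mathcal B_1$ to $\mathcal B_1(u)+\mathcal A_1(\operatorname{Ker}\mathcal B_1)$; similarly for the primed maps. *)

theory Defs
  imports "HOL-Analysis.Analysis"
begin

definition fin_dim_space :: "'a::real_vector itself \<Rightarrow> bool" where
  "fin_dim_space _ \<longleftrightarrow> (\<exists>B::'a set. finite B \<and> span B = UNIV)"

definition ker :: "('a \<Rightarrow> 'b::zero) \<Rightarrow> 'a set" where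
  "ker f = {x. f x = 0}"

definition coset :: "'a::plus \<Rightarrow> 'a set \<Rightarrow> 'a set" where
  "coset u K = (\<lambda>k. u + k) ` K"

definition quot_space :: "'a::plus set \<Rightarrow> 'a set set" where
  "quot_space K = range (\<lambda>u. coset u K)"

definition quot_top :: "'a::{plus,topological_space} set \<Rightarrow> 'a set topology" where
  "quot_top K = topology (\<lambda>S. S \<subseteq> quot_space K \<and> open {u. coset u K \<in> S})"

definition induced :: "('a \<Rightarrow> 'b::plus) \<Rightarrow> 'a set \<Rightarrow> 'b set \<Rightarrow> 'a set \<Rightarrow> 'b set" where
  "induced f K L c = coset (f (SOME u. u \<in> c)) L"

end

theory Submission
  imports Defs
begin

(* Everything happens at the level of cosets of linear subspaces.
   (1) Basic coset calculus: membership, equality of cosets, and the fact that a map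
       f which sends every coset u + K into the coset f(u) + L induces, via any choice
       of representative, the map u + K \<mapsto> f(u) + L on quotients.
   (2) The quotient topology: such an induced map is continuous whenever f is, and a
       homeomorphism sending each coset u + K ONTO f(u) + L induces a bijective
       homeomorphism of quotients (its inverse sends cosets onto cosets as well).
       Commuting squares of maps respecting cosets give commuting squares on quotients.
   (3) The concrete situation: psi B1 = B1' phi with phi bijective and psi injective
       forces phi(u + Ker B1) = phi(u) + Ker B1'; applying the linear maps A1, A1' and
       the surjectivity of A1 transfers this to psi and the cosets of A1(Ker B1). *)

lemma coset_mem: "subspace K \<Longrightarrow> w \<in> coset u K \<longleftrightarrow> w - u \<in> K"
  unfolding coset_def by (auto simp: subspace_diff) (metis add_diff_cancel_left' diff_add_cancel image_eqI add.commute)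

lemma coset_self: "subspace K \<Longrightarrow> u \<in> coset u K"
  by (simp add: coset_mem subspace_0)

lemma coset_eq_iff_mem:
  assumes K: "subspace K"
  shows "coset u K = coset w K \<longleftrightarrow> w \<in> coset u K"
proof
  assume "coset u K = coset w K"
  then show "w \<in> coset u K" using coset_self[OF K] by metis
next
  assume "w \<in> coset u K"
  then have wu: "w - u \<in> K" using coset_mem[OF K] by blast
  show "coset u K = coset w K"
  proof (rule set_eqI)
    fix x
    have "x - u = (x - w) + (w - u)" "x - w = (x - u) - (w - u)" by simp_all
    then show "x \<in> coset u K \<longleftrightarrow> x \<in> coset w K"
      using K wu by (metis coset_mem subspace_add subspace_diff)
  qed
qed

lemma subspace_ker: "linear B \<Longrightarrow> subspace (ker B)"
  unfolding ker_def by (rule linear_subspace_kernel)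

lemma coset_ker_mem: "linear B \<Longrightarrow> w \<in> coset u (ker B) \<longleftrightarrow> B w = B u"
  using coset_mem[OF subspace_ker[of B]] by (simp add: ker_def linear_diff)

lemma linear_image_coset: "linear A \<Longrightarrow> A ` coset u K = coset (A u) (A ` K)"
  unfolding coset_def image_image by (simp add: linear_add)

definition respects_cosets :: "('a \<Rightarrow> 'b::plus) \<Rightarrow> 'a::plus set \<Rightarrow> 'b set \<Rightarrow> bool" where
  "respects_cosets f K L \<longleftrightarrow> (\<forall>u. f ` coset u K \<subseteq> coset (f u) L)"

lemma induced_coset:
  assumes K: "subspace K" and L: "subspace L" and f: "respects_cosets f K L"
  shows "induced f K L (coset u K) = coset (f u) L"
proof -
  let ?r = "SOME x. x \<in> coset u K"
  have "?r \<in> coset u K" using coset_self[OF K] by (rule someI)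
  then have "f ?r \<in> coset (f u) L" using f unfolding respects_cosets_def by blast
  then show ?thesis unfolding induced_def using coset_eq_iff_mem[OF L] by metis
qed

lemma respects_cosets_ker: "linear B \<Longrightarrow> subspace L \<Longrightarrow> respects_cosets B (ker B) L"
  unfolding respects_cosets_def using coset_ker_mem coset_self by fastforce

lemma induced_square:
  assumes "subspace K" "subspace L" "subspace M" "subspace N"
    and "respects_cosets f1 K L" "respects_cosets g1 L M"
    and "respects_cosets f2 K N" "respects_cosets g2 N M"
    and comm: "\<And>x. g1 (f1 x) = g2 (f2 x)"
  shows "\<forall>c \<in> quot_space K. induced g1 L M (induced f1 K L c) = induced g2 N M (induced f2 K N c)"
proof
  fix c assume "c \<in> quot_space K"
  then obtain u where c: "c = coset u K" unfolding quot_space_def by blast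
  have "induced g1 L M (induced f1 K L c) = coset (g1 (f1 u)) M"
    using c assms induced_coset by metis
  also have "\<dots> = induced g2 N M (induced f2 K N c)"
    using c assms induced_coset by metis
  finally show "induced g1 L M (induced f1 K L c) = induced g2 N M (induced f2 K N c)" .
qed

text \<open>The defining predicate of quot_top is indeed a topology, so its open sets are
  exactly the sets of cosets whose union (as a saturated set) is open.\<close>
lemma openin_quot_top:
  "openin (quot_top K) S \<longleftrightarrow> S \<subseteq> quot_space K \<and> open {u. coset u K \<in> S}"
proof -
  have "istopology (\<lambda>S. S \<subseteq> quot_space K \<and> open {u. coset u K \<in> S})"
    unfolding istopology_def
  proof (rule conjI; intro allI impI)
    fix S T
    assume "S \<subseteq> quot_space K \<and> open {u. coset u K \<in> S}" "T \<subseteq> quot_space K \<and> open {u. coset u K \<in> T}"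
    moreover have "{u. coset u K \<in> S \<inter> T} = {u. coset u K \<in> S} \<inter> {u. coset u K \<in> T}" by auto
    ultimately show "S \<inter> T \<subseteq> quot_space K \<and> open {u. coset u K \<in> S \<inter> T}" by auto
  next
    fix \<K> assume "\<forall>S\<in>\<K>. S \<subseteq> quot_space K \<and> open {u. coset u K \<in> S}"
    moreover have "{u. coset u K \<in> \<Union>\<K>} = (\<Union>S\<in>\<K>. {u. coset u K \<in> S})" by auto
    ultimately show "\<Union>\<K> \<subseteq> quot_space K \<and> open {u. coset u K \<in> \<Union>\<K>}" by auto
  qed
  then show ?thesis unfolding quot_top_def by simp
qed

lemma topspace_quot_top: "topspace (quot_top K) = quot_space K"
proof -
  have "openin (quot_top K) (quot_space K)"
    unfolding openin_quot_top quot_space_def by auto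
  then have "quot_space K \<subseteq> topspace (quot_top K)" by (rule openin_subset)
  moreover have "topspace (quot_top K) \<subseteq> quot_space K"
    using openin_topspace[of "quot_top K"] unfolding openin_quot_top by blast
  ultimately show ?thesis by blast
qed

text \<open>The preimage of a set of cosets under the induced map, pulled back to the space,
  is the preimage under f of the corresponding saturated set; hence continuity descends.\<close>
lemma continuous_map_induced:
  assumes K: "subspace K" and L: "subspace L" and cont: "continuous_on UNIV f"
    and f: "respects_cosets f K L"
  shows "continuous_map (quot_top K) (quot_top L) (induced f K L)"
  unfolding continuous_map_def topspace_quot_top
proof (intro conjI allI impI)
  show "induced f K L \<in> quot_space K \<rightarrow> quot_space L"
    unfolding quot_space_def using induced_coset[OF K L f] by auto
next
  fix U assume "openin (quot_top L) U"
  then have "open {u. coset u L \<in> U}" by (simp add: openin_quot_top)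
  moreover have "\<forall>B. open B \<longrightarrow> open (f -` B)"
    using cont continuous_on_open_vimage[OF open_UNIV, of f] by simp
  ultimately have "open (f -` {u. coset u L \<in> U})" by blast
  moreover have "{u. coset u K \<in> {x \<in> quot_space K. induced f K L x \<in> U}} = f -` {u. coset u L \<in> U}"
    by (simp add: induced_coset[OF K L f] quot_space_def)
  ultimately show "openin (quot_top K) {x \<in> quot_space K. induced f K L x \<in> U}"
    by (simp add: openin_quot_top)
qed

text \<open>A homeomorphism sending each coset of K onto a coset of L induces a bijective
  homeomorphism of the quotients; the inverse is induced by the inverse homeomorphism.\<close>
lemma quotient_homeomorphism:
  assumes hm: "homeomorphic_map euclidean euclidean f" and K: "subspace K" and L: "subspace L"
    and im: "\<And>u. f ` coset u K = coset (f u) L"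
  shows "bij_betw (induced f K L) (quot_space K) (quot_space L)
    \<and> homeomorphic_map (quot_top K) (quot_top L) (induced f K L)"
proof -
  obtain g where "homeomorphic_maps euclidean euclidean f g"
    using hm homeomorphic_map_maps by blast
  then have cf: "continuous_on UNIV f" and cg: "continuous_on UNIV g"
    and gf: "\<And>x. g (f x) = x" and fg: "\<And>y. f (g y) = y"
    by (auto simp: homeomorphic_maps_def)
  have img: "g ` coset y L = coset (g y) K" for y
  proof -
    have "g ` f ` coset (g y) K = g ` coset y L" using im[of "g y"] fg by simp
    then show ?thesis by (simp add: image_image gf)
  qed
  have rf: "respects_cosets f K L" and rg: "respects_cosets g L K"
    unfolding respects_cosets_def using im img by auto
  note hf = induced_coset[OF K L rf] and hg = induced_coset[OF L K rg]
  have "homeomorphic_maps (quot_top K) (quot_top L) (induced f K L) (induced g L K)"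
    unfolding homeomorphic_maps_def topspace_quot_top
    using continuous_map_induced[OF K L cf rf] continuous_map_induced[OF L K cg rg] hf hg gf fg
    by (auto simp: quot_space_def)
  then have homeo: "homeomorphic_map (quot_top K) (quot_top L) (induced f K L)"
    using homeomorphic_map_maps by blast
  then have "bij_betw (induced f K L) (quot_space K) (quot_space L)"
    using homeomorphic_imp_injective_map homeomorphic_imp_surjective_map topspace_quot_top
    by (metis bij_betw_def)
  with homeo show ?thesis by blast
qed

lemma image_coset_ker:
  assumes B: "linear B" and B': "linear B'" and phi: "bij \<phi>" and psi: "inj \<psi>"
    and comm: "\<And>x. \<psi> (B x) = B' (\<phi> x)"
  shows "\<phi> ` coset u (ker B) = coset (\<phi> u) (ker B')"
proof (rule set_eqI)
  fix x
  have "x \<in> coset (\<phi> u) (ker B') \<longleftrightarrow> B' (\<phi> (inv \<phi> x)) = B' (\<phi> u)"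
    using coset_ker_mem[OF B'] phi by (simp add: bij_is_surj surj_f_inv_f)
  also have "\<dots> \<longleftrightarrow> B (inv \<phi> x) = B u"
    using psi comm by (metis injD)
  also have "\<dots> \<longleftrightarrow> inv \<phi> x \<in> coset u (ker B)"
    by (simp add: coset_ker_mem[OF B])
  also have "\<dots> \<longleftrightarrow> x \<in> \<phi> ` coset u (ker B)"
    using bij_inv_eq_iff[OF phi] by (metis (no_types, lifting) image_iff)
  finally show "x \<in> \<phi> ` coset u (ker B) \<longleftrightarrow> x \<in> coset (\<phi> u) (ker B')" ..
qed

lemma image_coset_linear_image:
  assumes A: "linear A" and A': "linear A'" and surj: "surj A"
    and comm: "\<And>x. \<psi> (A x) = A' (\<phi> x)"
    and phi: "\<And>u. \<phi> ` coset u K = coset (\<phi> u) K'"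
  shows "\<psi> ` coset v (A ` K) = coset (\<psi> v) (A' ` K')"
proof -
  obtain u where v: "v = A u" using surj by (metis surjD)
  have "\<psi> ` coset v (A ` K) = \<psi> ` A ` coset u K" using linear_image_coset[OF A] v by simp
  also have "\<dots> = A' ` \<phi> ` coset u K" by (simp add: image_image comm)
  also have "\<dots> = coset (A' (\<phi> u)) (A' ` K')" using phi linear_image_coset[OF A'] by simp
  finally show ?thesis using v comm by simp
qed

theorem lemma5:
  fixes A1 B1 :: "'u::real_normed_vector \<Rightarrow> 'v::real_normed_vector"
    and A1' B1' :: "'u2::real_normed_vector \<Rightarrow> 'v2::real_normed_vector"
    and \<phi>1 :: "'u \<Rightarrow> 'u2" and \<psi>1 :: "'v \<Rightarrow> 'v2"
  assumes "fin_dim_space TYPE('u)" "fin_dim_space TYPE('v)"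
    and "fin_dim_space TYPE('u2)" "fin_dim_space TYPE('v2)"
    and "linear A1" "linear B1" "surj A1" "surj B1"
    and "linear A1'" "linear B1'" "surj A1'" "surj B1'"
    and "homeomorphic_map euclidean euclidean \<phi>1"
    and "homeomorphic_map euclidean euclidean \<psi>1"
    and "\<psi>1 \<circ> A1 = A1' \<circ> \<phi>1" and "\<psi>1 \<circ> B1 = B1' \<circ> \<phi>1"
  shows "(\<forall>u. \<phi>1 ` coset u (ker B1) = coset (\<phi>1 u) (ker B1'))
    \<and> (\<forall>v. \<psi>1 ` coset v (A1 ` ker B1) = coset (\<psi>1 v) (A1' ` ker B1'))
    \<and> (\<forall>u w. coset u (ker B1) = coset w (ker B1)
          \<longrightarrow> coset (\<phi>1 u) (ker B1') = coset (\<phi>1 w) (ker B1'))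
    \<and> (\<forall>v w. coset v (A1 ` ker B1) = coset w (A1 ` ker B1)
          \<longrightarrow> coset (\<psi>1 v) (A1' ` ker B1') = coset (\<psi>1 w) (A1' ` ker B1'))
    \<and> bij_betw (induced \<phi>1 (ker B1) (ker B1')) (quot_space (ker B1)) (quot_space (ker B1'))
    \<and> bij_betw (induced \<psi>1 (A1 ` ker B1) (A1' ` ker B1'))
        (quot_space (A1 ` ker B1)) (quot_space (A1' ` ker B1'))
    \<and> homeomorphic_map (quot_top (ker B1)) (quot_top (ker B1'))
        (induced \<phi>1 (ker B1) (ker B1'))
    \<and> homeomorphic_map (quot_top (A1 ` ker B1)) (quot_top (A1' ` ker B1'))
        (induced \<psi>1 (A1 ` ker B1) (A1' ` ker B1'))
    \<and> (\<forall>c \<in> quot_space (ker B1).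
          induced \<psi>1 (A1 ` ker B1) (A1' ` ker B1') (induced A1 (ker B1) (A1 ` ker B1) c)
          = induced A1' (ker B1') (A1' ` ker B1') (induced \<phi>1 (ker B1) (ker B1') c))
    \<and> (\<forall>c \<in> quot_space (ker B1).
          induced \<psi>1 (A1 ` ker B1) (A1' ` ker B1') (induced B1 (ker B1) (A1 ` ker B1) c)
          = induced B1' (ker B1') (A1' ` ker B1') (induced \<phi>1 (ker B1) (ker B1') c))"
proof -
  note lin = assms(5,6,9,10) and hom = assms(13,14)
  have psiA: "\<psi>1 (A1 x) = A1' (\<phi>1 x)" and psiB: "\<psi>1 (B1 x) = B1' (\<phi>1 x)" for x
    using assms(15,16) by (metis comp_apply)+
  have K: "subspace (ker B1)" and K': "subspace (ker B1')" using lin subspace_ker by blast+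
  have W: "subspace (A1 ` ker B1)" and W': "subspace (A1' ` ker B1')"
    using lin K K' linear_subspace_image by blast+
  have "bij \<phi>1" "inj \<psi>1"
    using hom homeomorphic_imp_surjective_map homeomorphic_imp_injective_map
    by (fastforce simp: bij_betw_def)+
  then have P1: "\<phi>1 ` coset u (ker B1) = coset (\<phi>1 u) (ker B1')" for u
    using image_coset_ker lin psiB by metis
  have P2: "\<psi>1 ` coset v (A1 ` ker B1) = coset (\<psi>1 v) (A1' ` ker B1')" for v
    using image_coset_linear_image[OF lin(1,3) assms(7)] psiA P1 by metis
  have resp_phi: "respects_cosets \<phi>1 (ker B1) (ker B1')"
    and resp_psi: "respects_cosets \<psi>1 (A1 ` ker B1) (A1' ` ker B1')"
    and resp_A: "respects_cosets A1 (ker B1) (A1 ` ker B1)"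
    and resp_A': "respects_cosets A1' (ker B1') (A1' ` ker B1')"
    unfolding respects_cosets_def using P1 P2 linear_image_coset[OF lin(1)] linear_image_coset[OF lin(3)]
    by simp_all
  have resp_B: "respects_cosets B1 (ker B1) (A1 ` ker B1)"
    and resp_B': "respects_cosets B1' (ker B1') (A1' ` ker B1')"
    using respects_cosets_ker lin W W' by blast+
  have well_defined_phi: "coset (\<phi>1 u) (ker B1') = coset (\<phi>1 w) (ker B1')"
    if "coset u (ker B1) = coset w (ker B1)" for u w
    using that P1 by metis
  have well_defined_psi: "coset (\<psi>1 v) (A1' ` ker B1') = coset (\<psi>1 w) (A1' ` ker B1')"
    if "coset v (A1 ` ker B1) = coset w (A1 ` ker B1)" for v w
    using that P2 by metis
  show ?thesis
    using P1 P2 well_defined_phi well_defined_psi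
      quotient_homeomorphism[OF hom(1) K K' P1] quotient_homeomorphism[OF hom(2) W W' P2]
      induced_square[OF K W W' K' resp_A resp_psi resp_phi resp_A' psiA]
      induced_square[OF K W W' K' resp_B resp_psi resp_phi resp_B' psiB]
    by blast
qed

end
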